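(* A hypersemigroup $(H,\circ)$ is both regular and intra-regular if and only if for every right ideal $X$, every left ideal $Y$ and every bi-ideal $B$ of $H$ we have $X\cap B\cap Y\subseteq B*X*Y$.
   Context: Let $H$ be a nonempty set and $\mathcal{P}^*(H)$ the set of all nonempty subsets of $H$. A hyperoperation on $H$ is a map $\circ: H\times H\to \mathcal{P}^*(H)$; the pair $(H,\circ)$ is a hypergroupoid. For $A,B\in\mathcal{P}^*(H)$ define $A*B:=\bigcup_{(a,b)\in A\times B}(a\circ b)$. A hypergroupoid is a hypersemigroup if $\{x\}*(y\circ z)=(x\circ y)*\{z\}$ for all $x,y,z\in H$; then $*$ is associative on $\mathcal{P}^*(H)$. A hypersemigroup is regular if for every $a\in H$ there exists $x\in H$ with $a\in(a\circ x)*\{a\}$, and intra-regular if for every $a\in H$ there exist $x,y\in H$ with $a\in\{x\}*\{a\}*\{a\}*\{y\}$. A nonempty subset $A$ of $H$ is a left ideal if $H*A\subseteq A$ and a right ideal if $A*H\subseteq A$. A nonempty subset $B$ of $H$ is a bi-ideal if $B*H*B\subseteq B$. *)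

theory Defs
  imports Main
begin

text \<open>A hyperoperation on the whole type 'a (H = UNIV): values are nonempty subsets.\<close>

definition hypergroupoid :: "('a \<Rightarrow> 'a \<Rightarrow> 'a set) \<Rightarrow> bool" where
  "hypergroupoid ho \<longleftrightarrow> (\<forall>x y. ho x y \<noteq> {})"

definition setprod :: "('a \<Rightarrow> 'a \<Rightarrow> 'a set) \<Rightarrow> 'a set \<Rightarrow> 'a set \<Rightarrow> 'a set" where
  "setprod ho A B = (\<Union>(a, b) \<in> A \<times> B. ho a b)"

definition hypersemigroup :: "('a \<Rightarrow> 'a \<Rightarrow> 'a set) \<Rightarrow> bool" where
  "hypersemigroup ho \<longleftrightarrow> hypergroupoid ho \<and>
     (\<forall>x y z. setprod ho {x} (ho y z) = setprod ho (ho x y) {z})"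

definition regular_hs :: "('a \<Rightarrow> 'a \<Rightarrow> 'a set) \<Rightarrow> bool" where
  "regular_hs ho \<longleftrightarrow> (\<forall>a. \<exists>x. a \<in> setprod ho (ho a x) {a})"

definition intra_regular_hs :: "('a \<Rightarrow> 'a \<Rightarrow> 'a set) \<Rightarrow> bool" where
  "intra_regular_hs ho \<longleftrightarrow>
     (\<forall>a. \<exists>x y. a \<in> setprod ho (setprod ho (setprod ho {x} {a}) {a}) {y})"

definition left_ideal :: "('a \<Rightarrow> 'a \<Rightarrow> 'a set) \<Rightarrow> 'a set \<Rightarrow> bool" where
  "left_ideal ho A \<longleftrightarrow> A \<noteq> {} \<and> setprod ho UNIV A \<subseteq> A"

definition right_ideal :: "('a \<Rightarrow> 'a \<Rightarrow> 'a set) \<Rightarrow> 'a set \<Rightarrow> bool" where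
  "right_ideal ho A \<longleftrightarrow> A \<noteq> {} \<and> setprod ho A UNIV \<subseteq> A"

definition bi_ideal :: "('a \<Rightarrow> 'a \<Rightarrow> 'a set) \<Rightarrow> 'a set \<Rightarrow> bool" where
  "bi_ideal ho B \<longleftrightarrow> B \<noteq> {} \<and> setprod ho (setprod ho B UNIV) B \<subseteq> B"

end

theory Submission
  imports Defs
begin

text \<open>Write \<open>H\<close> for the whole hypersemigroup, so that regularity means \<open>a \<in> aHa\<close> and
  intra-regularity means \<open>a \<in> HaaH\<close>. If both hold and \<open>a \<in> X \<inter> B \<inter> Y\<close>, then
  \<open>a \<in> aHaHa \<subseteq> aH(HaaH)Ha = (aHHa)(aHH)a \<subseteq> BXY\<close>. Conversely, the condition applied to
  \<open>X = H\<close>, the principal left ideal \<open>{a} \<union> Ha\<close> and the principal bi-ideal \<open>{a} \<union> aHa\<close>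
  gives \<open>a \<in> aHa\<close>; then the principal right, left and bi-ideals of \<open>a\<close> are \<open>aH\<close>, \<open>Ha\<close>
  and \<open>aHa\<close>, and the condition yields \<open>a \<in> aHa aH Ha \<subseteq> HaaH\<close>.\<close>

lemma mem_setprod_iff: "t \<in> setprod ho A B \<longleftrightarrow> (\<exists>a\<in>A. \<exists>b\<in>B. t \<in> ho a b)"
  unfolding setprod_def by auto

lemma setprod_mono: "A \<subseteq> A' \<Longrightarrow> B \<subseteq> B' \<Longrightarrow> setprod ho A B \<subseteq> setprod ho A' B'"
  unfolding setprod_def by blast

lemma setprod_Un_left: "setprod ho (A \<union> B) C = setprod ho A C \<union> setprod ho B C"
  unfolding setprod_def by auto

lemma setprod_Un_right: "setprod ho C (A \<union> B) = setprod ho C A \<union> setprod ho C B"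
  unfolding setprod_def by auto

lemma right_idealD: "right_ideal ho X \<Longrightarrow> setprod ho X A \<subseteq> X"
  unfolding right_ideal_def using setprod_mono[of X X A UNIV ho] by blast

lemma bi_idealD: "bi_ideal ho B \<Longrightarrow> setprod ho (setprod ho B A) B \<subseteq> B"
  unfolding bi_ideal_def using setprod_mono[of "setprod ho B A" "setprod ho B UNIV" B B ho]
    setprod_mono[of B B A UNIV ho] by blast

lemma regular_hs_iff:
  "regular_hs ho \<longleftrightarrow> (\<forall>a. a \<in> setprod ho (setprod ho {a} UNIV) {a})"
proof -
  have "(\<exists>x. a \<in> setprod ho (ho a x) {a}) \<longleftrightarrow> a \<in> setprod ho (setprod ho {a} UNIV) {a}" for a
    unfolding mem_setprod_iff Bex_def by auto
  then show ?thesis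
    unfolding regular_hs_def by simp
qed

lemma intra_regular_hs_iff:
  "intra_regular_hs ho \<longleftrightarrow>
    (\<forall>a. a \<in> setprod ho (setprod ho (setprod ho UNIV {a}) {a}) UNIV)"
proof -
  have "(\<exists>x y. a \<in> setprod ho (setprod ho (setprod ho {x} {a}) {a}) {y}) \<longleftrightarrow>
      a \<in> setprod ho (setprod ho (setprod ho UNIV {a}) {a}) UNIV" for a
    unfolding mem_setprod_iff Bex_def by auto
  then show ?thesis
    unfolding intra_regular_hs_def by simp
qed

lemma right_ideal_UNIV: "right_ideal ho UNIV"
  unfolding right_ideal_def by simp

definition principal_right_ideal :: "('a \<Rightarrow> 'a \<Rightarrow> 'a set) \<Rightarrow> 'a \<Rightarrow> 'a set" where
  "principal_right_ideal ho a = {a} \<union> setprod ho {a} UNIV"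

definition principal_left_ideal :: "('a \<Rightarrow> 'a \<Rightarrow> 'a set) \<Rightarrow> 'a \<Rightarrow> 'a set" where
  "principal_left_ideal ho a = {a} \<union> setprod ho UNIV {a}"

definition principal_bi_ideal :: "('a \<Rightarrow> 'a \<Rightarrow> 'a set) \<Rightarrow> 'a \<Rightarrow> 'a set" where
  "principal_bi_ideal ho a = {a} \<union> setprod ho (setprod ho {a} UNIV) {a}"

locale hsemigroup =
  fixes ho :: "'a \<Rightarrow> 'a \<Rightarrow> 'a set"
  assumes hypersemigroup: "hypersemigroup ho"
begin

abbreviation hprod :: "'a set \<Rightarrow> 'a set \<Rightarrow> 'a set"  (infixl "\<star>" 70)
  where "A \<star> B \<equiv> setprod ho A B"

lemma setprod_assoc [simp]: "A \<star> B \<star> C = A \<star> (B \<star> C)"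
proof -
  have "t \<in> {x} \<star> ho y z \<longleftrightarrow> t \<in> ho x y \<star> {z}" for t x y z
    using hypersemigroup unfolding hypersemigroup_def by simp
  then have "(\<exists>w\<in>ho y z. t \<in> ho x w) \<longleftrightarrow> (\<exists>w\<in>ho x y. t \<in> ho w z)" for t x y z
    by (simp add: mem_setprod_iff)
  then show ?thesis
    unfolding set_eq_iff mem_setprod_iff Bex_def by blast
qed

lemma UNIV_setprod_absorb: "UNIV \<star> (UNIV \<star> A) \<subseteq> UNIV \<star> A"
  using setprod_mono[of "UNIV \<star> UNIV" UNIV A A ho] by simp

lemma setprod_UNIV_absorb: "A \<star> UNIV \<star> UNIV \<subseteq> A \<star> UNIV"
  using setprod_mono[of A A "UNIV \<star> UNIV" UNIV ho] by simp

lemma right_ideal_principal: "right_ideal ho (principal_right_ideal ho a)"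
  unfolding right_ideal_def principal_right_ideal_def setprod_Un_left
  using setprod_UNIV_absorb[of "{a}"] by auto

lemma left_ideal_principal: "left_ideal ho (principal_left_ideal ho a)"
  unfolding left_ideal_def principal_left_ideal_def setprod_Un_right
  using UNIV_setprod_absorb[of "{a}"] by auto

lemma principal_bi_ideal_setprod_UNIV: "principal_bi_ideal ho a \<star> UNIV \<subseteq> {a} \<star> UNIV"
  unfolding principal_bi_ideal_def setprod_Un_left
  using setprod_mono[of "{a}" "{a}" "UNIV \<star> ({a} \<star> UNIV)" UNIV ho] by auto

lemma UNIV_setprod_principal_left_ideal: "UNIV \<star> principal_left_ideal ho a \<subseteq> UNIV \<star> {a}"
  unfolding principal_left_ideal_def setprod_Un_right
  using UNIV_setprod_absorb[of "{a}"] by auto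

lemma principal_bi_ideal_subset_left: "principal_bi_ideal ho a \<subseteq> principal_left_ideal ho a"
  unfolding principal_bi_ideal_def principal_left_ideal_def
  using setprod_mono[of "{a} \<star> UNIV" UNIV "{a}" "{a}" ho] by auto

lemma bi_ideal_principal: "bi_ideal ho (principal_bi_ideal ho a)"
  unfolding bi_ideal_def
proof
  let ?B = "principal_bi_ideal ho a"
  show "?B \<noteq> {}"
    unfolding principal_bi_ideal_def by simp
  have "?B \<star> UNIV \<star> ?B \<subseteq> {a} \<star> UNIV \<star> principal_left_ideal ho a"
    by (intro setprod_mono principal_bi_ideal_setprod_UNIV principal_bi_ideal_subset_left)
  also have "\<dots> \<subseteq> {a} \<star> (UNIV \<star> {a})"
    using setprod_mono[OF order_refl UNIV_setprod_principal_left_ideal] by simp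
  also have "\<dots> \<subseteq> ?B"
    unfolding principal_bi_ideal_def by auto
  finally show "?B \<star> UNIV \<star> ?B \<subseteq> ?B" .
qed

lemma regular_element_principal_ideals:
  assumes "a \<in> {a} \<star> UNIV \<star> {a}"
  shows "principal_right_ideal ho a = {a} \<star> UNIV"
    and "principal_left_ideal ho a = UNIV \<star> {a}"
    and "principal_bi_ideal ho a = {a} \<star> UNIV \<star> {a}"
proof -
  have "{a} \<star> UNIV \<star> {a} \<subseteq> {a} \<star> UNIV" and "{a} \<star> UNIV \<star> {a} \<subseteq> UNIV \<star> {a}"
    using setprod_mono[of "{a}" "{a}" "UNIV \<star> {a}" UNIV ho]
      setprod_mono[of "{a} \<star> UNIV" UNIV "{a}" "{a}" ho] by auto
  with assms show "principal_right_ideal ho a = {a} \<star> UNIV"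
    and "principal_left_ideal ho a = UNIV \<star> {a}"
    and "principal_bi_ideal ho a = {a} \<star> UNIV \<star> {a}"
    unfolding principal_right_ideal_def principal_left_ideal_def principal_bi_ideal_def by auto
qed

lemma intersection_subset_if_regular_intra_regular:
  assumes "regular_hs ho" and "intra_regular_hs ho"
    and X: "right_ideal ho X" and B: "bi_ideal ho B"
  shows "X \<inter> B \<inter> Y \<subseteq> B \<star> X \<star> Y"
proof
  fix a
  assume a: "a \<in> X \<inter> B \<inter> Y"
  have reg: "{a} \<subseteq> {a} \<star> UNIV \<star> {a}" and intra: "{a} \<subseteq> UNIV \<star> {a} \<star> {a} \<star> UNIV"
    using assms(1,2) by (simp_all add: regular_hs_iff intra_regular_hs_iff del: setprod_assoc)
  have aHHa: "{a} \<star> (UNIV \<star> UNIV) \<star> {a} \<subseteq> B"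
    using a setprod_mono[OF setprod_mono, of "{a}" B "UNIV \<star> UNIV" "UNIV \<star> UNIV" "{a}" B ho]
      bi_idealD[OF B] by blast
  have aHH: "{a} \<star> (UNIV \<star> UNIV) \<subseteq> X"
    using a setprod_mono[of "{a}" X "UNIV \<star> UNIV" "UNIV \<star> UNIV" ho] right_idealD[OF X] by blast
  have "{a} \<subseteq> {a} \<star> UNIV \<star> {a}"
    by (rule reg)
  also have "\<dots> \<subseteq> {a} \<star> UNIV \<star> ({a} \<star> UNIV \<star> {a})"
    by (intro setprod_mono order_refl reg)
  also have "\<dots> \<subseteq> {a} \<star> UNIV \<star> ((UNIV \<star> {a} \<star> {a} \<star> UNIV) \<star> UNIV \<star> {a})"
    by (intro setprod_mono order_refl intra)
  also have "\<dots> = ({a} \<star> (UNIV \<star> UNIV) \<star> {a}) \<star> ({a} \<star> (UNIV \<star> UNIV)) \<star> {a}"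
    by simp
  also have "\<dots> \<subseteq> B \<star> X \<star> Y"
    using a by (intro setprod_mono aHHa aHH) auto
  finally show "a \<in> B \<star> X \<star> Y"
    by blast
qed

context
  assumes condition: "\<And>X Y B. right_ideal ho X \<Longrightarrow> left_ideal ho Y \<Longrightarrow> bi_ideal ho B \<Longrightarrow>
    X \<inter> B \<inter> Y \<subseteq> B \<star> X \<star> Y"
begin

lemma regular_if_condition: "regular_hs ho"
  unfolding regular_hs_iff
proof
  fix a
  let ?B = "principal_bi_ideal ho a" and ?L = "principal_left_ideal ho a"
  have "a \<in> UNIV \<inter> ?B \<inter> ?L"
    unfolding principal_bi_ideal_def principal_left_ideal_def by simp
  also have "\<dots> \<subseteq> ?B \<star> UNIV \<star> ?L"
    by (intro condition right_ideal_UNIV left_ideal_principal bi_ideal_principal)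
  also have "\<dots> \<subseteq> {a} \<star> UNIV \<star> ?L"
    by (intro setprod_mono principal_bi_ideal_setprod_UNIV order_refl)
  also have "\<dots> \<subseteq> {a} \<star> (UNIV \<star> {a})"
    using setprod_mono[OF order_refl UNIV_setprod_principal_left_ideal] by simp
  finally show "a \<in> {a} \<star> UNIV \<star> {a}"
    by simp
qed

lemma intra_regular_if_condition: "intra_regular_hs ho"
  unfolding intra_regular_hs_iff
proof
  fix a
  have reg: "a \<in> {a} \<star> UNIV \<star> {a}"
    using regular_if_condition by (simp add: regular_hs_iff del: setprod_assoc)
  note principal = regular_element_principal_ideals[OF reg]
  have "a \<in> principal_right_ideal ho a \<inter> principal_bi_ideal ho a \<inter> principal_left_ideal ho a"
    unfolding principal_right_ideal_def principal_bi_ideal_def principal_left_ideal_def by simp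
  also have "\<dots> \<subseteq> principal_bi_ideal ho a \<star> principal_right_ideal ho a \<star> principal_left_ideal ho a"
    by (intro condition right_ideal_principal left_ideal_principal bi_ideal_principal)
  also have "\<dots> = ({a} \<star> UNIV) \<star> {a} \<star> {a} \<star> (UNIV \<star> (UNIV \<star> {a}))"
    unfolding principal by simp
  also have "\<dots> \<subseteq> UNIV \<star> {a} \<star> {a} \<star> UNIV"
    by (intro setprod_mono order_refl subset_UNIV)
  finally show "a \<in> UNIV \<star> {a} \<star> {a} \<star> UNIV" .
qed

end

end

theorem proposition25:
  fixes ho :: "'a \<Rightarrow> 'a \<Rightarrow> 'a set"
  assumes "hypersemigroup ho"
  shows "(regular_hs ho \<and> intra_regular_hs ho) \<longleftrightarrow>
    (\<forall>X Y B. right_ideal ho X \<longrightarrow> left_ideal ho Y \<longrightarrow> bi_ideal ho B \<longrightarrow>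
       X \<inter> B \<inter> Y \<subseteq> setprod ho (setprod ho B X) Y)"
proof -
  interpret hsemigroup ho
    using assms by unfold_locales
  show ?thesis
    using intersection_subset_if_regular_intra_regular
      regular_if_condition intra_regular_if_condition by blast
qed

end
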